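(* Let $m<n$, let $\mathbf{p}=(p_1,\ldots,p_n)$ be a probability vector with $p_1\geq\cdots\geq p_n\geq 0$, and let $\mathbf{q}=(q_1,\ldots,q_m)$ be a probability vector with $q_1\geq\cdots\geq q_m\geq 0$. If $\mathbf{p}\preceq\mathbf{q}$, then $R_m(\mathbf{p})\preceq\mathbf{q}$.
   Context: Majorization: for probability vectors $\mathbf{a},\mathbf{b}$, each sorted in nonincreasing order, with the shorter one padded with zeros to equal length, $\mathbf{a}\preceq\mathbf{b}$ means $\sum_{k=1}^i a_k\leq\sum_{k=1}^i b_k$ for all $i$. Definition of $R_m(\mathbf{p})=(r_1,\ldots,r_m)$: if $p_1<1/m$, then $R_m(\mathbf{p})=(1/m,\ldots,1/m)$. If $p_1\geq 1/m$, let $i^*$ be the maximum index $i\in\{1,\ldots,m-1\}$ with $p_i\geq \frac{\sum_{j=i+1}^n p_j}{m-i}$. Then $r_i=p_i$ for $i\leq i^*$ and $r_i=\frac{\sum_{j=i^*+1}^n p_j}{m-i^*}$ for $i=i^*+1,\ldots,m$. *)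

theory Defs
  imports Complex_Main
begin

(* Vectors are functions nat => real, with the entries of a vector of length n
   stored at indices 1..n. *)

definition prob_vec :: "nat \<Rightarrow> (nat \<Rightarrow> real) \<Rightarrow> bool" where
  "prob_vec n p \<longleftrightarrow> (\<forall>i\<in>{1..n}. 0 \<le> p i) \<and> (\<Sum>i=1..n. p i) = 1"

definition nonincr :: "nat \<Rightarrow> (nat \<Rightarrow> real) \<Rightarrow> bool" where
  "nonincr n p \<longleftrightarrow> (\<forall>i j. 1 \<le> i \<longrightarrow> i \<le> j \<longrightarrow> j \<le> n \<longrightarrow> p j \<le> p i)"

definition pad :: "nat \<Rightarrow> (nat \<Rightarrow> real) \<Rightarrow> nat \<Rightarrow> real" where
  "pad n a k = (if 1 \<le> k \<and> k \<le> n then a k else 0)"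

definition majorized :: "nat \<Rightarrow> (nat \<Rightarrow> real) \<Rightarrow> nat \<Rightarrow> (nat \<Rightarrow> real) \<Rightarrow> bool" where
  "majorized n a m b \<longleftrightarrow>
     (\<forall>i\<in>{1..max n m}. (\<Sum>k=1..i. pad n a k) \<le> (\<Sum>k=1..i. pad m b k))"

(* the index i^* ; the set is empty only when m = 1, in which case we take i^* = 0 *)
definition istar :: "nat \<Rightarrow> nat \<Rightarrow> (nat \<Rightarrow> real) \<Rightarrow> nat" where
  "istar m n p = (let S = {i\<in>{1..m-1}. p i \<ge> (\<Sum>j=i+1..n. p j) / real (m - i)}
                  in if S = {} then 0 else Max S)"

definition R :: "nat \<Rightarrow> nat \<Rightarrow> (nat \<Rightarrow> real) \<Rightarrow> nat \<Rightarrow> real" where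
  "R m n p i =
     (if p 1 < 1 / real m then 1 / real m
      else if i \<le> istar m n p then p i
      else (\<Sum>j=istar m n p + 1..n. p j) / real (m - istar m n p))"

end

theory Submission
  imports Defs
begin

text \<open>
  Whatever branch the definition of \<open>R\<^sub>m(p)\<close> takes, it keeps \<open>p\<close> on some
  prefix \<open>1..a\<close> with \<open>a < m\<close> and spreads the remaining mass evenly over
  \<open>a+1..m\<close>. Up to \<open>a\<close> its partial sums are those of \<open>p\<close>, hence dominated by
  those of \<open>q\<close>. Beyond \<open>a\<close> they interpolate linearly between \<open>P\<^sub>a\<close> and
  \<open>1\<close>, while the partial sums of the nonincreasing \<open>q\<close> are concave and so
  lie above the chord from \<open>Q\<^sub>a \<ge> P\<^sub>a\<close> to \<open>Q\<^sub>m = 1\<close>.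
\<close>

lemma sum_atLeastAtMost_split:
  fixes f :: "nat \<Rightarrow> 'a::comm_monoid_add"
  assumes "a \<le> b"
  shows "sum f {1..b} = sum f {1..a} + sum f {a+1..b}"
proof -
  obtain d where "b = a + d" using assms le_Suc_ex by blast
  then show ?thesis using sum.ub_add_nat[of 1 a f d] by simp
qed

lemma nonincr_block_average_mono:
  assumes "nonincr m q" "a \<le> i" "i \<le> m"
  shows "real (i - a) * sum q {a+1..m} \<le> real (m - a) * sum q {a+1..i}"
proof (cases "i = a")
  case False
  define A where "A = sum q {a+1..i}"
  define B where "B = sum q {i+1..m}"
  have head: "real (i - a) * q i \<le> A"
  proof -
    have "sum (\<lambda>_. q i) {a+1..i} \<le> A"
      unfolding A_def by (rule sum_mono) (use assms in \<open>auto simp: nonincr_def\<close>)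
    then show ?thesis by simp
  qed
  have tail: "B \<le> real (m - i) * q i"
  proof -
    have "B \<le> sum (\<lambda>_. q i) {i+1..m}"
      unfolding B_def by (rule sum_mono) (use assms False in \<open>auto simp: nonincr_def\<close>)
    then show ?thesis by simp
  qed
  have "real (i - a) * B \<le> real (i - a) * (real (m - i) * q i)"
    using tail by (simp add: mult_left_mono)
  also have "\<dots> = real (m - i) * (real (i - a) * q i)"
    by simp
  also have "\<dots> \<le> real (m - i) * A"
    using head by (simp add: mult_left_mono)
  finally have "real (i - a) * B \<le> real (m - i) * A" .
  moreover have "sum q {a+1..m} = A + B"
    using sum_atLeastAtMost_split[of i m q] sum_atLeastAtMost_split[of a i q]
      sum_atLeastAtMost_split[of a m q] assms unfolding A_def B_def by simp
  moreover have "real (m - a) = real (m - i) + real (i - a)"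
    using assms by simp
  ultimately show ?thesis unfolding A_def[symmetric] by (simp add: algebra_simps)
qed simp

lemma majorized_prefix_sum_le:
  assumes "majorized n a m b" "i \<le> min n m"
  shows "sum a {1..i} \<le> sum b {1..i}"
proof (cases "i = 0")
  case False
  then have "(\<Sum>k=1..i. pad n a k) \<le> (\<Sum>k=1..i. pad m b k)"
    using assms unfolding majorized_def by auto
  moreover have "(\<Sum>k=1..i. pad n a k) = sum a {1..i}" "(\<Sum>k=1..i. pad m b k) = sum b {1..i}"
    using assms(2) by (auto intro: sum.cong simp: pad_def)
  ultimately show ?thesis by simp
qed simp

lemma majorized_same_lengthI:
  assumes "\<And>i. 1 \<le> i \<Longrightarrow> i \<le> m \<Longrightarrow> sum a {1..i} \<le> sum b {1..i}"
  shows "majorized m a m b"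
proof -
  have "(\<Sum>k=1..i. pad m f k) = sum f {1..i}" if "i \<le> m" for i and f :: "nat \<Rightarrow> real"
    using that by (auto intro: sum.cong simp: pad_def)
  then show ?thesis using assms unfolding majorized_def by auto
qed

definition flatten_after :: "nat \<Rightarrow> nat \<Rightarrow> nat \<Rightarrow> (nat \<Rightarrow> real) \<Rightarrow> nat \<Rightarrow> real" where
  "flatten_after m n a p k = (if k \<le> a then p k else (\<Sum>j=a+1..n. p j) / real (m - a))"

lemma istar_less:
  assumes "1 \<le> m"
  shows "istar m n p < m"
proof -
  let ?S = "{i\<in>{1..m-1}. p i \<ge> (\<Sum>j=i+1..n. p j) / real (m - i)}"
  have "?S \<noteq> {} \<Longrightarrow> Max ?S \<in> ?S" by (rule Max_in) auto
  then show ?thesis using assms by (auto simp: istar_def Let_def)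
qed

lemma R_eq_flatten_after:
  assumes "1 \<le> m" "prob_vec n p"
  obtains a where "a < m" "\<And>k. 1 \<le> k \<Longrightarrow> R m n p k = flatten_after m n a p k"
proof (cases "p 1 < 1 / real m")
  case True
  \<comment> \<open>the uniform vector is the case \<open>a = 0\<close>, since the total mass is \<open>1\<close>\<close>
  have "sum p {1..n} = 1" using assms(2) by (simp add: prob_vec_def)
  then have "R m n p k = flatten_after m n 0 p k" if "1 \<le> k" for k
    using True that by (simp add: R_def flatten_after_def)
  then show ?thesis using that[of 0] assms(1) by simp
next
  case False
  then have "R m n p k = flatten_after m n (istar m n p) p k" for k
    by (simp add: R_def flatten_after_def)
  then show ?thesis using that istar_less[OF assms(1)] by blast
qed

lemma flatten_after_prefix_sum_le:
  assumes "a < m" "a \<le> n" "nonincr m q" "sum p {1..n} = sum q {1..m}"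
    and "\<And>j. j \<le> a \<Longrightarrow> sum p {1..j} \<le> sum q {1..j}"
    and "i \<le> m"
  shows "(\<Sum>k=1..i. flatten_after m n a p k) \<le> sum q {1..i}"
proof (cases "i \<le> a")
  case True
  then have "(\<Sum>k=1..i. flatten_after m n a p k) = sum p {1..i}"
    by (auto intro: sum.cong simp: flatten_after_def)
  then show ?thesis using assms(5) True by simp
next
  case False
  define P where "P = sum p {1..a}"
  define Q where "Q = sum q {1..a}"
  define T where "T = sum q {1..m}"
  define c where "c = (\<Sum>j=a+1..n. p j) / real (m - a)"
  have mass: "real (m - a) * c = T - P"
    using assms(1,2,4) sum_atLeastAtMost_split[of a n p] unfolding c_def P_def T_def by simp
  have "(\<Sum>k=1..i. flatten_after m n a p k)
        = (\<Sum>k=1..a. flatten_after m n a p k) + (\<Sum>k=a+1..i. flatten_after m n a p k)"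
    using False sum_atLeastAtMost_split[of a i] by simp
  also have "\<dots> = P + real (i - a) * c"
    unfolding P_def c_def by (auto intro: sum.cong simp: flatten_after_def)
  finally have R_sum: "(\<Sum>k=1..i. flatten_after m n a p k) = P + real (i - a) * c" .
  have "real (i - a) * (T - Q) \<le> real (m - a) * (sum q {1..i} - Q)"
    using nonincr_block_average_mono[OF assms(3), of a i] False assms(1,6)
      sum_atLeastAtMost_split[of a m q] sum_atLeastAtMost_split[of a i q]
    unfolding Q_def T_def by simp
  moreover have "real (m - a) = real (m - i) + real (i - a)"
    using False assms(6) by simp
  ultimately have chord: "real (m - i) * Q + real (i - a) * T \<le> real (m - a) * sum q {1..i}"
    by (simp add: algebra_simps)
  have "real (m - a) * (P + real (i - a) * c) = real (m - a) * P + real (i - a) * (real (m - a) * c)"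
    by (simp add: algebra_simps)
  also have "\<dots> = real (m - a) * P + real (i - a) * (T - P)"
    using mass by simp
  also have "\<dots> = real (m - i) * P + real (i - a) * T"
    using \<open>real (m - a) = real (m - i) + real (i - a)\<close> by (simp add: algebra_simps)
  also have "\<dots> \<le> real (m - i) * Q + real (i - a) * T"
    using assms(5)[of a] unfolding P_def Q_def by (simp add: mult_left_mono)
  finally have "real (m - a) * (P + real (i - a) * c) \<le> real (m - a) * sum q {1..i}"
    using chord by linarith
  then show ?thesis using R_sum assms(1) by simp
qed

theorem lemma4:
  fixes m n :: nat and p q :: "nat \<Rightarrow> real"
  assumes "1 \<le> m" and "m < n"
    and "prob_vec n p" and "nonincr n p"
    and "prob_vec m q" and "nonincr m q"
    and "majorized n p m q"
  shows "majorized m (R m n p) m q"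
proof (rule majorized_same_lengthI)
  fix i assume "1 \<le> i" "i \<le> m"
  obtain a where a: "a < m" "\<And>k. 1 \<le> k \<Longrightarrow> R m n p k = flatten_after m n a p k"
    using R_eq_flatten_after assms(1,3) by blast
  then have R_sum: "sum (R m n p) {1..i} = (\<Sum>k=1..i. flatten_after m n a p k)"
    by (intro sum.cong) auto
  have prefix: "sum p {1..j} \<le> sum q {1..j}" if "j \<le> m" for j
    using majorized_prefix_sum_le[OF assms(7)] that assms(2) by simp
  have "sum p {1..n} = sum q {1..m}"
    using assms(3,5) by (simp add: prob_vec_def)
  then show "sum (R m n p) {1..i} \<le> sum q {1..i}"
    using flatten_after_prefix_sum_le[of a m n q p i] a R_sum prefix assms(2,6) \<open>i \<le> m\<close> by simp
qed

end
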